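(* Let $W=e^{-q}$ be the bivariate Freud weight and $\{\mathbb{P}_n\}$ an orthonormal polynomial system for it, with matrices $G^n_k$, $G_n$ as in the context. Write $x_1=x$, $x_2=y$, and for $i=1,2$ let $F^n_{m,i}$ ($(n+1)\times(m+1)$ real matrices) be the coefficients of the expansion $x_i^2\mathbb{P}_n=\sum_{m=0}^{n+2}F^n_{m,i}\mathbb{P}_m$. Then for $n\geqslant2$ and $i=1,2$, $$F^n_{n,i}=G^n_{n-2}G_{n-2}^{-1}(F^n_{n-2,i})^T-F^n_{n+2,i}G^{n+2}_nG_n^{-1}.$$
   Context: Parameters $a_{4,0},a_{2,2},a_{0,4}\geqslant0$, $a_{2,0},a_{0,2}\in\mathbb{R}$, $a_{4,0}+a_{2,2}>0$, $a_{2,2}+a_{0,4}>0$; $q(x,y)=a_{4,0}x^4+a_{2,2}x^2y^2+a_{0,4}y^4+a_{2,0}x^2+a_{0,2}y^2$, $W=e^{-q}$, inner product $(f,g)=\iint_{\mathbb{R}^2}fgW\,dx\,dy$ (entrywise on vectors). $\mathbb{X}_n=(x^n,x^{n-1}y,\dots,y^n)^T$. An orthonormal polynomial system: column vectors $\mathbb{P}_n=(P_{n,0},\dots,P_{n,n})^T$ of linearly independent polynomials of exact total degree $n$ with $(\mathbb{P}_n,\mathbb{P}_m^T)=\delta_{nm}I_{n+1}$ (the entries of all $\mathbb{P}_m$ form a basis of all polynomials, so the expansion exists and is unique). Write $\mathbb{P}_n=\sum_kG^n_k\mathbb{X}_k$ with constant $(n+1)\times(k+1)$ matrices, $G_n:=G^n_n$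 invertible. *)

theory Defs
  imports "HOL-Analysis.Analysis" "Jordan_Normal_Form.Matrix"
begin

definition freud_q :: "real \<Rightarrow> real \<Rightarrow> real \<Rightarrow> real \<Rightarrow> real \<Rightarrow> real \<Rightarrow> real \<Rightarrow> real" where
  "freud_q a40 a22 a04 a20 a02 x y =
     a40 * x^4 + a22 * x^2 * y^2 + a04 * y^4 + a20 * x^2 + a02 * y^2"

definition freud_W :: "real \<Rightarrow> real \<Rightarrow> real \<Rightarrow> real \<Rightarrow> real \<Rightarrow> real \<Rightarrow> real \<Rightarrow> real" where
  "freud_W a40 a22 a04 a20 a02 x y = exp (- freud_q a40 a22 a04 a20 a02 x y)"

definition wip :: "(real \<Rightarrow> real \<Rightarrow> real) \<Rightarrow> (real \<Rightarrow> real \<Rightarrow> real) \<Rightarrow> (real \<Rightarrow> real \<Rightarrow> real) \<Rightarrow> real" where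
  "wip W f g = integral\<^sup>L (lborel :: (real \<times> real) measure) (\<lambda>(x, y). f x y * g x y * W x y)"

text \<open>Entry j of P_n = sum_{k<=n} G^n_k X_k, where X_k = (x^k, x^(k-1) y, ..., y^k)^T,
  G n k being an (n+1) x (k+1) real matrix.\<close>
definition opsP :: "(nat \<Rightarrow> nat \<Rightarrow> real mat) \<Rightarrow> nat \<Rightarrow> nat \<Rightarrow> real \<Rightarrow> real \<Rightarrow> real" where
  "opsP G n j x y = (\<Sum>k\<le>n. \<Sum>l\<le>k. (G n k $$ (j, l)) * x ^ (k - l) * y ^ l)"

definition orthonormal_system :: "(real \<Rightarrow> real \<Rightarrow> real) \<Rightarrow> (nat \<Rightarrow> nat \<Rightarrow> real mat) \<Rightarrow> bool" where
  "orthonormal_system W G \<longleftrightarrow>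
     (\<forall>n k. k \<le> n \<longrightarrow> G n k \<in> carrier_mat (n + 1) (k + 1)) \<and>
     (\<forall>n. invertible_mat (G n n)) \<and>
     (\<forall>n m j l. j \<le> n \<longrightarrow> l \<le> m \<longrightarrow>
        wip W (opsP G n j) (opsP G m l) = (if n = m \<and> j = l then 1 else 0))"

definition minv :: "real mat \<Rightarrow> real mat" where
  "minv A = (SOME B. B \<in> carrier_mat (dim_row A) (dim_row A) \<and>
                     A * B = 1\<^sub>m (dim_row A) \<and> B * A = 1\<^sub>m (dim_row A))"

end

theory Submission
  imports Defs
begin

text \<open>Comparing the coefficients of the monomial vector \<open>X\<^sub>n\<close> on both sides of
  \<open>x\<^sub>i\<^sup>2 P\<^sub>n = \<Sum>\<^sub>m F\<^sup>n\<^sub>m P\<^sub>m\<close> gives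
  \<open>G\<^sup>n\<^sub>n\<^sub>-\<^sub>2 L = F\<^sup>n\<^sub>n G\<^sub>n + F\<^sup>n\<^sub>n\<^sub>+\<^sub>1 G\<^sup>n\<^sup>+\<^sup>1\<^sub>n + F\<^sup>n\<^sub>n\<^sub>+\<^sub>2 G\<^sup>n\<^sup>+\<^sup>2\<^sub>n\<close>, where \<open>L\<close> is the
  0/1 matrix with \<open>x\<^sub>i\<^sup>2 X\<^sub>n\<^sub>-\<^sub>2 = L X\<^sub>n\<close>. As \<open>W\<close> is invariant under \<open>(x, y) \<mapsto> (-x, -y)\<close>,
  \<open>P\<^sub>n\<close> has parity \<open>(-1)\<^sup>n\<close>, so \<open>G\<^sup>n\<^sup>+\<^sup>1\<^sub>n = 0\<close>. The same comparison in the top degree of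
  \<open>x\<^sub>i\<^sup>2 P\<^sub>n\<^sub>-\<^sub>2\<close> gives \<open>F\<^sup>n\<^sup>-\<^sup>2\<^sub>n G\<^sub>n = G\<^sub>n\<^sub>-\<^sub>2 L\<close>, and \<open>F\<^sup>n\<^sup>-\<^sup>2\<^sub>n = (F\<^sup>n\<^sub>n\<^sub>-\<^sub>2)\<^sup>T\<close> because both
  matrices record the inner products of \<open>x\<^sub>i\<^sup>2 P\<^sub>n\<^sub>-\<^sub>2\<close> with \<open>P\<^sub>n\<close>. Eliminating \<open>L\<close> gives the
  formula.\<close>

definition bipoly :: "nat \<Rightarrow> (nat \<Rightarrow> nat \<Rightarrow> real) \<Rightarrow> real \<Rightarrow> real \<Rightarrow> real" where
  "bipoly N c x y = (\<Sum>k\<le>N. \<Sum>l\<le>k. c k l * x ^ (k - l) * y ^ l)"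

lemma opsP_eq_bipoly: "opsP G n j = bipoly n (\<lambda>k l. G n k $$ (j, l))"
  by (simp add: opsP_def bipoly_def fun_eq_iff)

lemma bipoly_cong:
  "(\<And>k l. k \<le> N \<Longrightarrow> l \<le> k \<Longrightarrow> c k l = d k l) \<Longrightarrow> bipoly N c x y = bipoly N d x y"
  unfolding bipoly_def by (intro sum.cong) auto

lemma bipoly_diff: "bipoly N c x y - bipoly N d x y = bipoly N (\<lambda>k l. c k l - d k l) x y"
  by (simp add: bipoly_def sum_subtractf left_diff_distrib)

lemma bipoly_cmult: "a * bipoly N c x y = bipoly N (\<lambda>k l. a * c k l) x y"
  by (simp add: bipoly_def sum_distrib_left mult.assoc)

lemma bipoly_sum:
  "finite S \<Longrightarrow> (\<Sum>s\<in>S. bipoly N (c s) x y) = bipoly N (\<lambda>k l. \<Sum>s\<in>S. c s k l) x y"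
  by (induct S rule: finite_induct) (auto simp: bipoly_def sum.distrib distrib_right)

lemma bipoly_raise_degree:
  "N \<le> M \<Longrightarrow> bipoly N c x y = bipoly M (\<lambda>k l. if k \<le> N then c k l else 0) x y"
  unfolding bipoly_def by (rule sum.mono_neutral_cong_left) auto

lemma bipoly_Suc_top_zero:
  "(\<And>l. l \<le> Suc N \<Longrightarrow> c (Suc N) l = 0) \<Longrightarrow> bipoly (Suc N) c x y = bipoly N c x y"
  by (simp add: bipoly_def)

lemma bipoly_reflect: "bipoly N c (- x) (- y) = bipoly N (\<lambda>k l. (- 1) ^ k * c k l) x y"
proof -
  have "c k l * (- x) ^ (k - l) * (- y) ^ l = (- 1) ^ k * c k l * x ^ (k - l) * y ^ l"
    if "l \<le> k" for k l :: nat
  proof -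
    have "(- 1 :: real) ^ (k - l) * (- 1) ^ l = (- 1) ^ k"
      using that by (simp add: power_add[symmetric])
    then show ?thesis
      by (simp add: power_minus[of x] power_minus[of y] mult_ac)
  qed
  then show ?thesis
    unfolding bipoly_def by (intro sum.cong) auto
qed

lemma bipoly_by_powers_of_x:
  "bipoly N c x y = (\<Sum>a\<le>N. (\<Sum>l\<le>N - a. c (a + l) l * y ^ l) * x ^ a)"
proof -
  have "bipoly N c x y = (\<Sum>(k, l)\<in>Sigma {..N} (\<lambda>k. {..k}). c k l * x ^ (k - l) * y ^ l)"
    unfolding bipoly_def by (simp add: sum.Sigma)
  also have "\<dots> = (\<Sum>(a, l)\<in>Sigma {..N} (\<lambda>a. {..N - a}). c (a + l) l * y ^ l * x ^ a)"
    by (rule sum.reindex_bij_witness[of _ "\<lambda>(a, l). (a + l, l)" "\<lambda>(k, l). (k - l, l)"]) auto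
  also have "\<dots> = (\<Sum>a\<le>N. (\<Sum>l\<le>N - a. c (a + l) l * y ^ l) * x ^ a)"
    by (simp add: sum.Sigma[symmetric] sum_distrib_right)
  finally show ?thesis .
qed

lemma bipoly_eq_0_imp_coeff_0:
  assumes "\<And>x y. bipoly N c x y = 0" "k \<le> N" "l \<le> k"
  shows "c k l = 0"
proof -
  have "\<forall>y. (\<Sum>l'\<le>N - a. c (a + l') l' * y ^ l') = 0" if "a \<le> N" for a
  proof
    fix y
    have "\<forall>x. (\<Sum>a\<le>N. (\<Sum>l'\<le>N - a. c (a + l') l' * y ^ l') * x ^ a) = 0"
      using assms(1) by (simp add: bipoly_by_powers_of_x)
    then show "(\<Sum>l'\<le>N - a. c (a + l') l' * y ^ l') = 0"
      using that by (simp only: polyfun_eq_0)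
  qed
  then have "\<forall>l'\<le>N - (k - l). c (k - l + l') l' = 0"
    using assms(2) by (simp only: polyfun_eq_0) simp
  then show ?thesis
    using assms(2,3) by (metis diff_le_mono le_add_diff_inverse2 diff_diff_cancel)
qed

lemma bipoly_coeff_unique:
  assumes "\<And>x y. bipoly N c x y = bipoly N d x y" "k \<le> N" "l \<le> k"
  shows "c k l = d k l"
  using bipoly_eq_0_imp_coeff_0[of N "\<lambda>k l. c k l - d k l" k l] assms
  by (simp add: bipoly_diff[symmetric])

lemma sum_atMost_Suc_Suc_shift:
  "(\<Sum>k\<le>Suc (Suc N). g k) = g 0 + g 1 + (\<Sum>k\<le>N. g (Suc (Suc k)))"
  by (simp add: sum.atMost_Suc_shift add.assoc del: sum.atMost_Suc)

lemma bipoly_add_2_shift: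
  assumes "\<And>k l. k < 2 \<Longrightarrow> l \<le> k \<Longrightarrow> c k l = 0"
  shows "bipoly (N + 2) c x y = (\<Sum>k\<le>N. \<Sum>l\<le>k + 2. c (k + 2) l * x ^ (k + 2 - l) * y ^ l)"
  unfolding bipoly_def add_2_eq_Suc'
  by (subst sum_atMost_Suc_Suc_shift) (simp add: assms del: sum.atMost_Suc)

lemma x_sq_mult_bipoly:
  "x ^ 2 * bipoly N c x y = bipoly (N + 2) (\<lambda>k l. if 2 \<le> k \<and> l \<le> k - 2 then c (k - 2) l else 0) x y"
proof -
  have "x ^ 2 * bipoly N c x y = (\<Sum>k\<le>N. x ^ 2 * (\<Sum>l\<le>k. c k l * x ^ (k - l) * y ^ l))"
    by (simp add: bipoly_def sum_distrib_left)
  also have "\<dots> = (\<Sum>k\<le>N. \<Sum>l\<le>k + 2. (if l \<le> k then c k l else 0) * x ^ (k + 2 - l) * y ^ l)"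
    by (auto simp: numeral_2_eq_2 sum_distrib_left Suc_diff_le power2_eq_square mult_ac
             intro!: sum.cong)
  also have "\<dots> = bipoly (N + 2) (\<lambda>k l. if 2 \<le> k \<and> l \<le> k - 2 then c (k - 2) l else 0) x y"
    by (subst bipoly_add_2_shift) auto
  finally show ?thesis .
qed

lemma y_sq_mult_bipoly:
  "y ^ 2 * bipoly N c x y = bipoly (N + 2) (\<lambda>k l. if 2 \<le> l then c (k - 2) (l - 2) else 0) x y"
proof -
  have "y ^ 2 * bipoly N c x y = (\<Sum>k\<le>N. y ^ 2 * (\<Sum>l\<le>k. c k l * x ^ (k - l) * y ^ l))"
    by (simp add: bipoly_def sum_distrib_left)
  also have "\<dots> = (\<Sum>k\<le>N. \<Sum>l\<le>k + 2. (if 2 \<le> l then c k (l - 2) else 0) * x ^ (k + 2 - l) * y ^ l)"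
    by (simp add: numeral_2_eq_2 sum_atMost_Suc_Suc_shift sum_distrib_left power2_eq_square mult_ac
             del: sum.atMost_Suc)
  also have "\<dots> = bipoly (N + 2) (\<lambda>k l. if 2 \<le> l then c (k - 2) (l - 2) else 0) x y"
    by (subst bipoly_add_2_shift) (simp_all cong: if_cong del: sum.atMost_Suc)
  finally show ?thesis .
qed

lemma borel_measurable_bipoly: "(\<lambda>(x, y). bipoly N c x y) \<in> borel_measurable borel"
  unfolding bipoly_def case_prod_beta
  by (intro borel_measurable_continuous_onI continuous_intros)

lemma minv_inverse:
  assumes "invertible_mat A" "A \<in> carrier_mat n n"
  shows "minv A \<in> carrier_mat n n" "A * minv A = 1\<^sub>m n" "minv A * A = 1\<^sub>m n"
proof -
  obtain B where B: "A * B = 1\<^sub>m n" "B * A = 1\<^sub>m (dim_row B)"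
    using assms unfolding invertible_mat_def inverts_mat_def by auto
  then have "B \<in> carrier_mat n n"
    using assms(2) by (metis carrier_matD(2) carrier_matI index_mult_mat(3) index_one_mat(3))
  with B assms(2) have "\<exists>B. B \<in> carrier_mat (dim_row A) (dim_row A)
      \<and> A * B = 1\<^sub>m (dim_row A) \<and> B * A = 1\<^sub>m (dim_row A)"
    by auto
  from someI_ex[OF this] assms(2)
  show "minv A \<in> carrier_mat n n" "A * minv A = 1\<^sub>m n" "minv A * A = 1\<^sub>m n"
    unfolding minv_def by auto
qed

lemma minv_elimination:
  assumes B: "invertible_mat B" "B \<in> carrier_mat q q"
    and M: "invertible_mat M" "M \<in> carrier_mat p p"
    and carriers: "A \<in> carrier_mat r q" "C \<in> carrier_mat q p" "L \<in> carrier_mat q p"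
      "Y \<in> carrier_mat r p" "X \<in> carrier_mat r p"
    and eqY: "Y * M + X = A * L" and eqC: "C * M = B * L"
  shows "Y = A * minv B * C - X * minv M"
proof -
  note Binv = minv_inverse[OF B] and Minv = minv_inverse[OF M]
  have L: "L = minv B * C * M"
  proof -
    have "minv B * C * M = minv B * (C * M)"
      by (rule assoc_mult_mat[OF Binv(1) carriers(2) M(2)])
    also have "\<dots> = (minv B * B) * L"
      unfolding eqC by (rule assoc_mult_mat[OF Binv(1) B(2) carriers(3), symmetric])
    also have "\<dots> = L"
      using Binv(3) carriers(3) by simp
    finally show ?thesis ..
  qed
  have AB: "A * minv B \<in> carrier_mat r q" and CM: "C * M \<in> carrier_mat q p"
    using carriers Binv(1) M(2) by auto
  have "A * minv B * C = A * minv B * C * (M * minv M)"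
    using AB carriers(2) Minv(2) by simp
  also have "\<dots> = A * minv B * C * M * minv M"
    using AB carriers(2) by (intro assoc_mult_mat[OF _ M(2) Minv(1), symmetric]) auto
  also have "\<dots> = A * L * minv M"
    by (simp add: L assoc_mult_mat[OF AB carriers(2) M(2)] assoc_mult_mat[OF carriers(1) Binv(1) CM]
        assoc_mult_mat[OF Binv(1) carriers(2) M(2)])
  also have "\<dots> = (Y * M + X) * minv M"
    by (simp add: eqY)
  also have "\<dots> = Y * (M * minv M) + X * minv M"
    using carriers(4,5) M(2) Minv(1)
    by (simp add: add_mult_distrib_mat[of _ r p] assoc_mult_mat[of Y r p M p])
  finally show ?thesis
    using carriers Minv by auto
qed

lemma index_mult_mat_sum:
  assumes "A \<in> carrier_mat r q" "B \<in> carrier_mat q c" "i < r" "j < c"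
  shows "(A * B) $$ (i, j) = (\<Sum>k<q. A $$ (i, k) * B $$ (k, j))"
  using assms by (auto simp: scalar_prod_def atLeast0LessThan intro!: sum.cong)

lemma index_mult_mat_atMost:
  assumes "A \<in> carrier_mat r (Suc q)" "B \<in> carrier_mat (Suc q) c" "i < r" "j < c"
  shows "(A * B) $$ (i, j) = (\<Sum>k\<le>q. A $$ (i, k) * B $$ (k, j))"
  using index_mult_mat_sum[OF assms] by (simp add: lessThan_Suc_atMost)

text \<open>With \<open>x\<^sub>1 = x\<close> and \<open>x\<^sub>2 = y\<close>, \<open>x\<^sub>i\<^sup>2 X\<^sub>k\<^sub>-\<^sub>2 = shift_mat i k X\<^sub>k\<close>; every \<open>i \<noteq> 1\<close> is treated as \<open>y\<close>.\<close>

definition shift_mat :: "nat \<Rightarrow> nat \<Rightarrow> real mat" where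
  "shift_mat i k = mat (k - 1) (k + 1) (\<lambda>(a, b). if b = (if i = 1 then a else a + 2) then 1 else 0)"

lemma shift_mat_carrier: "shift_mat i k \<in> carrier_mat (k - 1) (k + 1)"
  by (simp add: shift_mat_def)

lemma index_mult_shift_mat:
  assumes "A \<in> carrier_mat r (k - 1)" "j < r" "l \<le> k" "2 \<le> k"
  shows "(A * shift_mat i k) $$ (j, l) =
    (if i = 1 then if l \<le> k - 2 then A $$ (j, l) else 0 else if 2 \<le> l then A $$ (j, l - 2) else 0)"
proof -
  have "(A * shift_mat i k) $$ (j, l) = (\<Sum>a<k - 1. A $$ (j, a) * shift_mat i k $$ (a, l))"
    using assms(2,3) by (intro index_mult_mat_sum[OF assms(1) shift_mat_carrier]) auto
  also have "\<dots> = (\<Sum>a<k - 1.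
      if a = (if i = 1 then l else l - 2) \<and> (i = 1 \<or> 2 \<le> l) then A $$ (j, a) else 0)"
    using assms(3) by (intro sum.cong) (auto simp: shift_mat_def)
  finally show ?thesis
    using assms(3,4) by auto
qed

lemma var_sq_mult_opsP:
  assumes "\<And>k. k \<le> n \<Longrightarrow> G n k \<in> carrier_mat (n + 1) (k + 1)" "j \<le> n"
  shows "(if i = 1 then x else y) ^ 2 * opsP G n j x y
    = bipoly (n + 2) (\<lambda>k l. if 2 \<le> k then (G n (k - 2) * shift_mat i k) $$ (j, l) else 0) x y"
proof -
  have entry: "(G n (k - 2) * shift_mat i k) $$ (j, l) = (if i = 1 then if l \<le> k - 2
      then G n (k - 2) $$ (j, l) else 0 else if 2 \<le> l then G n (k - 2) $$ (j, l - 2) else 0)"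
    if "2 \<le> k" "k \<le> n + 2" "l \<le> k" for i k l
  proof -
    have "k - 2 + 1 = k - 1" using that(1) by arith
    then have "G n (k - 2) \<in> carrier_mat (n + 1) (k - 1)"
      using assms(1)[of "k - 2"] that(2) by simp
    from index_mult_shift_mat[OF this _ that(3,1)] show ?thesis
      using assms(2) by simp
  qed
  show ?thesis
    by (cases "i = 1") (auto simp: opsP_eq_bipoly x_sq_mult_bipoly y_sq_mult_bipoly entry
        intro!: bipoly_cong)
qed

lemma opsP_combination_eq_bipoly:
  "(\<Sum>m\<le>N. \<Sum>l'\<le>m. f m l' * opsP G m l' x y)
    = bipoly N (\<lambda>k l. \<Sum>m\<in>{k..N}. \<Sum>l'\<le>m. f m l' * G m k $$ (l', l)) x y"
proof -
  have "f m l' * opsP G m l' x y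
      = bipoly N (\<lambda>k l. if k \<le> m then f m l' * G m k $$ (l', l) else 0) x y" if "m \<le> N" for m l'
    using that by (simp add: opsP_eq_bipoly bipoly_cmult bipoly_raise_degree[of m N] if_distrib
        cong: if_cong)
  then have "(\<Sum>m\<le>N. \<Sum>l'\<le>m. f m l' * opsP G m l' x y)
      = bipoly N (\<lambda>k l. \<Sum>m\<le>N. \<Sum>l'\<le>m. if k \<le> m then f m l' * G m k $$ (l', l) else 0) x y"
    by (simp add: bipoly_sum)
  also have "\<dots> = bipoly N (\<lambda>k l. \<Sum>m\<in>{k..N}. \<Sum>l'\<le>m. f m l' * G m k $$ (l', l)) x y"
    by (intro bipoly_cong sum.mono_neutral_cong_right) auto
  finally show ?thesis .
qed

definition wip_integrand :: "(real \<Rightarrow> real \<Rightarrow> real) \<Rightarrow> (real \<Rightarrow> real \<Rightarrow> real)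
    \<Rightarrow> (real \<Rightarrow> real \<Rightarrow> real) \<Rightarrow> real \<times> real \<Rightarrow> real" where
  "wip_integrand W f g = (\<lambda>(x, y). f x y * g x y * W x y)"

lemma wip_eq_integral: "wip W f g = integral\<^sup>L lborel (wip_integrand W f g)"
  by (simp add: wip_def wip_integrand_def)

lemma wip_commute: "wip W f g = wip W g f"
  by (simp add: wip_def mult_ac)

lemma wip_diff_cmult_left:
  assumes "integrable lborel (wip_integrand W f h)" "integrable lborel (wip_integrand W g h)"
  shows "wip W (\<lambda>x y. f x y - a * g x y) h = wip W f h - a * wip W g h"
proof -
  have "wip_integrand W (\<lambda>x y. f x y - a * g x y) h
      = (\<lambda>z. wip_integrand W f h z - a * wip_integrand W g h z)"
    by (auto simp: wip_integrand_def algebra_simps)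
  then show ?thesis
    using assms by (simp add: wip_eq_integral)
qed

lemma lborel_distr_uminus_euclidean: "distr lborel borel uminus = (lborel :: 'a::euclidean_space measure)"
  by (subst lborel_affine[of "-1" 0]) (auto simp: density_1 one_ennreal_def[symmetric])

lemma wip_reflect:
  assumes "wip_integrand W f g \<in> borel_measurable borel" "\<And>x y. W (- x) (- y) = W x y"
  shows "wip W (\<lambda>x y. f (- x) (- y)) (\<lambda>x y. g (- x) (- y)) = wip W f g"
proof -
  have "wip W f g = integral\<^sup>L (distr lborel borel uminus) (wip_integrand W f g)"
    by (simp add: wip_eq_integral lborel_distr_uminus_euclidean)
  also have "\<dots> = integral\<^sup>L lborel (\<lambda>z. wip_integrand W f g (- z))"
    using assms(1) by (simp add: integral_distr)
  also have "(\<lambda>z. wip_integrand W f g (- z))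
      = wip_integrand W (\<lambda>x y. f (- x) (- y)) (\<lambda>x y. g (- x) (- y))"
    by (auto simp: wip_integrand_def assms(2))
  finally show ?thesis
    by (simp add: wip_eq_integral)
qed

locale even_weight_ops =
  fixes W :: "real \<Rightarrow> real \<Rightarrow> real" and G :: "nat \<Rightarrow> nat \<Rightarrow> real mat"
  assumes ops: "orthonormal_system W G"
    and W_measurable: "(\<lambda>(x, y). W x y) \<in> borel_measurable borel"
    and W_nonneg: "\<And>x y. 0 \<le> W x y"
    and W_even: "\<And>x y. W (- x) (- y) = W x y"
begin

lemma G_carrier: "k \<le> n \<Longrightarrow> G n k \<in> carrier_mat (n + 1) (k + 1)"
  using ops unfolding orthonormal_system_def by blast

lemma G_invertible: "invertible_mat (G n n)"
  using ops unfolding orthonormal_system_def by blast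

lemma wip_opsP:
  "j \<le> n \<Longrightarrow> l \<le> m \<Longrightarrow> wip W (opsP G n j) (opsP G m l) = (if n = m \<and> j = l then 1 else 0)"
  using ops unfolding orthonormal_system_def by blast

lemma wip_integrand_bipoly_measurable:
  "wip_integrand W (bipoly N c) (bipoly M d) \<in> borel_measurable borel"
proof -
  note [measurable] =
    W_measurable[unfolded case_prod_beta'] borel_measurable_bipoly[unfolded case_prod_beta']
  show ?thesis
    unfolding wip_integrand_def by measurable
qed

text \<open>A diagonal integrand is integrable because its integral is \<open>1 \<noteq> 0\<close>; the others are
  dominated by \<open>(a\<^sup>2 + b\<^sup>2) W\<close>.\<close>

lemma integrable_wip_integrand_opsP:
  assumes "j \<le> n" "l \<le> m"
  shows "integrable lborel (wip_integrand W (opsP G n j) (opsP G m l))"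
proof -
  have diag: "integrable lborel (wip_integrand W (opsP G k i) (opsP G k i))" if "i \<le> k" for k i
    using wip_opsP[OF that that] not_integrable_integral_eq by (force simp: wip_eq_integral)
  show ?thesis
  proof (rule Bochner_Integration.integrable_bound
      [OF Bochner_Integration.integrable_add[OF diag[OF assms(1)] diag[OF assms(2)]]])
    show "wip_integrand W (opsP G n j) (opsP G m l) \<in> borel_measurable lborel"
      using wip_integrand_bipoly_measurable by (simp add: opsP_eq_bipoly)
    have "\<bar>a * b * w\<bar> \<le> \<bar>a * a * w + b * b * w\<bar>" if "0 \<le> w" for a b w :: real
    proof -
      have "0 \<le> (a - b) * (a - b)" "0 \<le> (a + b) * (a + b)"
        by auto
      then have "\<bar>a * b\<bar> \<le> a * a + b * b"
        by (simp add: algebra_simps abs_le_iff)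
      then have "\<bar>a * b\<bar> * w \<le> (a * a + b * b) * w"
        using that by (rule mult_right_mono)
      then show ?thesis
        using that by (simp add: abs_mult algebra_simps)
    qed
    then show "AE z in lborel. norm (wip_integrand W (opsP G n j) (opsP G m l) z)
        \<le> norm (wip_integrand W (opsP G n j) (opsP G n j) z
          + wip_integrand W (opsP G m l) (opsP G m l) z)"
      by (simp add: wip_integrand_def case_prod_beta W_nonneg)
  qed
qed

lemma wip_opsP_expansion:
  assumes h: "\<And>x y. h x y = (\<Sum>m\<le>N. \<Sum>l'\<le>m. c m l' * opsP G m l' x y)" and "l \<le> m"
  shows "wip W h (opsP G m l) = (if m \<le> N then c m l else 0)"
    and "integrable lborel (wip_integrand W h (opsP G m l))"
proof -
  define t where "t m' l' = wip_integrand W (opsP G m' l') (opsP G m l)" for m' l'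
  have eq: "wip_integrand W h (opsP G m l) = (\<lambda>z. \<Sum>m'\<le>N. \<Sum>l'\<le>m'. c m' l' * t m' l' z)"
    by (auto simp: t_def wip_integrand_def h sum_distrib_right mult.assoc)
  have int: "integrable lborel (t m' l')" if "l' \<le> m'" for m' l'
    using that assms(2) by (auto simp: t_def intro: integrable_wip_integrand_opsP)
  then show "integrable lborel (wip_integrand W h (opsP G m l))"
    unfolding eq by (intro Bochner_Integration.integrable_sum integrable_mult_right) auto
  have "wip W h (opsP G m l) = (\<Sum>m'\<le>N. integral\<^sup>L lborel (\<lambda>z. \<Sum>l'\<le>m'. c m' l' * t m' l' z))"
    unfolding wip_eq_integral eq using int
    by (intro Bochner_Integration.integral_sum Bochner_Integration.integrable_sum
        integrable_mult_right) auto
  also have "\<dots> = (\<Sum>m'\<le>N. \<Sum>l'\<le>m'. c m' l' * wip W (opsP G m' l') (opsP G m l))"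
    using int by (simp add: Bochner_Integration.integral_sum wip_eq_integral t_def)
  also have "\<dots> = (\<Sum>m'\<le>N. if m' = m then c m l else 0)"
    using assms(2) by (intro sum.cong) (auto simp: wip_opsP if_distrib[of "(*) _"] cong: if_cong)
  also have "\<dots> = (if m \<le> N then c m l else 0)"
    by simp
  finally show "wip W h (opsP G m l) = (if m \<le> N then c m l else 0)" .
qed

lemma bipoly_split_top_degree:
  "\<exists>a r. (\<forall>l\<le>D. r D l = 0)
    \<and> (\<forall>x y. bipoly D c x y = (\<Sum>j\<le>D. a j * opsP G D j x y) + bipoly D r x y)"
proof -
  define H where "H = minv (G D D)"
  have H: "H * G D D = 1\<^sub>m (D + 1)" "H \<in> carrier_mat (D + 1) (D + 1)"
    using minv_inverse[OF G_invertible G_carrier[of D D]] by (auto simp: H_def)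
  define a where "a j = (\<Sum>l\<le>D. c D l * H $$ (l, j))" for j
  define t where "t k l' = (\<Sum>j\<le>D. a j * G D k $$ (j, l'))" for k l'
  have top: "(\<Sum>j\<le>D. a j * opsP G D j x y) = bipoly D t x y" for x y
    unfolding t_def by (simp add: bipoly_sum bipoly_cmult opsP_eq_bipoly)
  have "t D l' = c D l'" if "l' \<le> D" for l'
  proof -
    have "t D l' = (\<Sum>j\<le>D. \<Sum>l\<le>D. c D l * (H $$ (l, j) * G D D $$ (j, l')))"
      by (simp add: t_def a_def sum_distrib_right mult.assoc)
    also have "\<dots> = (\<Sum>l\<le>D. c D l * (\<Sum>j\<le>D. H $$ (l, j) * G D D $$ (j, l')))"
      by (subst sum.swap) (simp add: sum_distrib_left)
    also have "\<dots> = (\<Sum>l\<le>D. c D l * (H * G D D) $$ (l, l'))"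
      using H(2) G_carrier[of D D] \<open>l' \<le> D\<close>
      by (intro sum.cong refl arg_cong[where f = "(*) _"]
          index_mult_mat_atMost[symmetric, of _ "D + 1"]) auto
    also have "\<dots> = c D l'"
      using that by (simp add: H(1) if_distrib[of "(*) _"] cong: if_cong)
    finally show ?thesis .
  qed
  then show ?thesis
    using top
    by (intro exI[of _ a] exI[of _ "\<lambda>k l. c k l - t k l"]) (auto simp: bipoly_diff[symmetric])
qed

lemma bipoly_opsP_expansion: "\<exists>e. \<forall>x y. bipoly d c x y = (\<Sum>m\<le>d. \<Sum>l\<le>m. e m l * opsP G m l x y)"
proof (induction d arbitrary: c)
  case 0
  obtain a r where "\<forall>l\<le>0. r 0 l = 0"
    and "\<forall>x y. bipoly 0 c x y = (\<Sum>j\<le>0. a j * opsP G 0 j x y) + bipoly 0 r x y"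
    using bipoly_split_top_degree by blast
  then show ?case
    by (intro exI[of _ "\<lambda>m l. a l"]) (simp add: bipoly_def)
next
  case (Suc d)
  obtain a r where r: "\<forall>l\<le>Suc d. r (Suc d) l = 0"
    and ar: "\<forall>x y. bipoly (Suc d) c x y
      = (\<Sum>j\<le>Suc d. a j * opsP G (Suc d) j x y) + bipoly (Suc d) r x y"
    using bipoly_split_top_degree by blast
  obtain e where e: "\<forall>x y. bipoly d r x y = (\<Sum>m\<le>d. \<Sum>l\<le>m. e m l * opsP G m l x y)"
    using Suc.IH by blast
  define e' where "e' m l = (if m \<le> d then e m l else a l)" for m l
  have "bipoly (Suc d) c x y = (\<Sum>m\<le>Suc d. \<Sum>l\<le>m. e' m l * opsP G m l x y)" for x y
  proof -
    have "(\<Sum>m\<le>d. \<Sum>l\<le>m. e' m l * opsP G m l x y) = (\<Sum>m\<le>d. \<Sum>l\<le>m. e m l * opsP G m l x y)"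
      by (intro sum.cong) (auto simp: e'_def)
    then show ?thesis
      using ar e r bipoly_Suc_top_zero[of d r] by (simp add: e'_def)
  qed
  then show ?case
    by blast
qed

lemma integrable_wip_integrand_bipoly_opsP:
  assumes "l \<le> m"
  shows "integrable lborel (wip_integrand W (bipoly d c) (opsP G m l))"
proof -
  obtain e where "\<And>x y. bipoly d c x y = (\<Sum>m\<le>d. \<Sum>l\<le>m. e m l * opsP G m l x y)"
    using bipoly_opsP_expansion by blast
  from wip_opsP_expansion(2)[OF this assms] show ?thesis .
qed

lemma bipoly_eq_0_if_orthogonal:
  assumes "\<And>m l. m \<le> d \<Longrightarrow> l \<le> m \<Longrightarrow> wip W (bipoly d c) (opsP G m l) = 0"
  shows "bipoly d c x y = 0"
proof -
  obtain e where e: "\<And>x y. bipoly d c x y = (\<Sum>m\<le>d. \<Sum>l\<le>m. e m l * opsP G m l x y)"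
    using bipoly_opsP_expansion by blast
  have "e m l = 0" if "m \<le> d" "l \<le> m" for m l
    using wip_opsP_expansion(1)[OF e that(2)] assms that by simp
  then show ?thesis
    by (simp add: e)
qed

lemma wip_bipoly_opsP_lower_degree:
  assumes "d < k" "j \<le> k"
  shows "wip W (bipoly d c) (opsP G k j) = 0"
proof -
  obtain e where "\<And>x y. bipoly d c x y = (\<Sum>m\<le>d. \<Sum>l\<le>m. e m l * opsP G m l x y)"
    using bipoly_opsP_expansion by blast
  from wip_opsP_expansion(1)[OF this assms(2)] show ?thesis
    using assms(1) by simp
qed

lemma wip_reflected_opsP_lower_degree:
  assumes "j \<le> k" "m < k"
  shows "wip W (\<lambda>x y. opsP G k j (- x) (- y)) (opsP G m l) = 0"
proof -
  have "wip W (\<lambda>x y. opsP G k j (- x) (- y)) (opsP G m l)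
      = wip W (opsP G k j) (\<lambda>x y. opsP G m l (- x) (- y))"
    using wip_reflect[of W "\<lambda>x y. opsP G k j (- x) (- y)" "opsP G m l"] W_even
      wip_integrand_bipoly_measurable
    by (simp add: opsP_eq_bipoly bipoly_reflect)
  also have "\<dots> = 0"
    using wip_bipoly_opsP_lower_degree[OF assms(2,1)]
    by (subst wip_commute) (simp add: opsP_eq_bipoly bipoly_reflect)
  finally show ?thesis .
qed

text \<open>The difference \<open>P(-x, -y) - (-1)\<^sup>k P(x, y)\<close> has degree below \<open>k\<close> and is orthogonal to
  all polynomials of degree below \<open>k\<close>.\<close>

lemma opsP_reflect:
  assumes "j \<le> k"
  shows "opsP G k j (- x) (- y) = (- 1) ^ k * opsP G k j x y"
proof (cases k)
  case 0
  then show ?thesis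
    by (simp add: opsP_def)
next
  case (Suc d)
  define D where "D m l = ((- 1) ^ m - (- 1) ^ k) * G k m $$ (j, l)" for m l
  have D: "opsP G k j (- x) (- y) - (- 1) ^ k * opsP G k j x y = bipoly d D x y" for x y
  proof -
    have "opsP G k j (- x) (- y) - (- 1) ^ k * opsP G k j x y = bipoly k D x y"
      by (simp add: opsP_eq_bipoly bipoly_reflect bipoly_cmult bipoly_diff D_def[abs_def]
          left_diff_distrib)
    also have "\<dots> = bipoly d D x y"
      unfolding Suc by (rule bipoly_Suc_top_zero) (simp add: D_def Suc)
    finally show ?thesis .
  qed
  have "wip W (bipoly d D) (opsP G m l) = 0" if "m \<le> d" "l \<le> m" for m l
  proof -
    have "m < k"
      using that Suc by simp
    have "bipoly d D = (\<lambda>x y. opsP G k j (- x) (- y) - (- 1) ^ k * opsP G k j x y)"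
      by (intro ext) (simp add: D)
    moreover have "integrable lborel
        (wip_integrand W (\<lambda>x y. opsP G k j (- x) (- y)) (opsP G m l))"
      using integrable_wip_integrand_bipoly_opsP[OF that(2)]
      by (simp add: opsP_eq_bipoly bipoly_reflect)
    ultimately show ?thesis
      using wip_diff_cmult_left[OF _ integrable_wip_integrand_opsP[OF assms that(2)]]
        wip_reflected_opsP_lower_degree[OF assms \<open>m < k\<close>] wip_opsP[OF assms that(2)] \<open>m < k\<close>
      by simp
  qed
  then have "bipoly d D x y = 0"
    by (rule bipoly_eq_0_if_orthogonal)
  then show ?thesis
    using D[of x y] by linarith
qed

lemma G_Suc_entry_eq_0:
  assumes "j \<le> Suc n" "l \<le> n"
  shows "G (Suc n) n $$ (j, l) = 0"
proof -
  have "bipoly (Suc n) (\<lambda>k l. (- 1) ^ k * G (Suc n) k $$ (j, l)) x y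
      = bipoly (Suc n) (\<lambda>k l. (- 1) ^ Suc n * G (Suc n) k $$ (j, l)) x y" for x y
    using opsP_reflect[OF assms(1), of x y]
    by (simp add: opsP_eq_bipoly bipoly_reflect bipoly_cmult)
  from bipoly_coeff_unique[OF this, of n l] assms(2)
  have "(- 1) ^ n * G (Suc n) n $$ (j, l) = (- 1) ^ Suc n * G (Suc n) n $$ (j, l)"
    by simp
  then show ?thesis
    by (cases "even n") auto
qed

end

locale var_sq_expansion = even_weight_ops +
  fixes F :: "nat \<Rightarrow> nat \<Rightarrow> real mat" and i :: nat
  assumes F_carrier: "m \<le> n + 2 \<Longrightarrow> F n m \<in> carrier_mat (n + 1) (m + 1)"
    and F_expansion: "j \<le> n \<Longrightarrow> (if i = 1 then x else y) ^ 2 * opsP G n j x y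
      = (\<Sum>m\<le>n + 2. \<Sum>l\<le>m. F n m $$ (j, l) * opsP G m l x y)"
begin

lemma F_entry_eq_wip:
  assumes "j \<le> n" "m \<le> n + 2" "l \<le> m"
  shows "F n m $$ (j, l) = wip W (\<lambda>x y. (if i = 1 then x else y) ^ 2 * opsP G n j x y) (opsP G m l)"
  using wip_opsP_expansion(1)[OF F_expansion[OF assms(1)] assms(3)] assms(2) by simp

lemma F_transpose:
  assumes "m \<le> n + 2" "n \<le> m + 2"
  shows "F m n = transpose_mat (F n m)"
proof (rule eq_matI)
  fix j l assume "j < dim_row (transpose_mat (F n m))" "l < dim_col (transpose_mat (F n m))"
  then have jl: "j \<le> m" "l \<le> n"
    using F_carrier[OF assms(1)] by auto
  have "F m n $$ (j, l) = wip W (\<lambda>x y. (if i = 1 then x else y) ^ 2 * opsP G n l x y) (opsP G m j)"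
    using F_entry_eq_wip[OF jl(1) assms(2) jl(2)] by (simp add: wip_def mult_ac)
  also have "\<dots> = F n m $$ (l, j)"
    using F_entry_eq_wip[OF jl(2) assms(1) jl(1)] ..
  finally show "F m n $$ (j, l) = transpose_mat (F n m) $$ (j, l)"
    using F_carrier[OF assms(1)] jl by simp
qed (use F_carrier[OF assms(1)] F_carrier[OF assms(2)] in auto)

text \<open>Comparison of the coefficients of \<open>X\<^sub>k\<close> on both sides of the expansion of \<open>x\<^sub>i\<^sup>2 P\<^sub>n\<close>.\<close>

lemma shift_mat_coeff_eq_sum:
  assumes "j \<le> n" "2 \<le> k" "k \<le> n + 2" "l \<le> k"
  shows "(G n (k - 2) * shift_mat i k) $$ (j, l) = (\<Sum>m\<in>{k..n + 2}. (F n m * G m k) $$ (j, l))"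
proof -
  have "bipoly (n + 2) (\<lambda>k l. if 2 \<le> k then (G n (k - 2) * shift_mat i k) $$ (j, l) else 0) x y
      = bipoly (n + 2) (\<lambda>k l. \<Sum>m\<in>{k..n + 2}. \<Sum>l'\<le>m. F n m $$ (j, l') * G m k $$ (l', l)) x y"
    for x y
    using var_sq_mult_opsP[where G = G and n = n, OF G_carrier assms(1)] F_expansion[OF assms(1)]
    by (simp add: opsP_combination_eq_bipoly)
  from bipoly_coeff_unique[OF this assms(3,4)] assms(2)
  have "(G n (k - 2) * shift_mat i k) $$ (j, l)
      = (\<Sum>m\<in>{k..n + 2}. \<Sum>l'\<le>m. F n m $$ (j, l') * G m k $$ (l', l))"
    by simp
  also have "\<dots> = (\<Sum>m\<in>{k..n + 2}. (F n m * G m k) $$ (j, l))"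
    using F_carrier G_carrier assms(1,4)
    by (intro sum.cong refl index_mult_mat_atMost[symmetric, of _ "n + 1"]) auto
  finally show ?thesis .
qed

lemma top_degree_coeff_relation: "F n (n + 2) * G (n + 2) (n + 2) = G n n * shift_mat i (n + 2)"
proof (rule eq_matI)
  fix j l
  assume "j < dim_row (G n n * shift_mat i (n + 2))" "l < dim_col (G n n * shift_mat i (n + 2))"
  then have "j \<le> n" "l \<le> n + 2"
    using G_carrier[of n n] by (auto simp: shift_mat_def)
  from shift_mat_coeff_eq_sum[OF this(1) _ _ this(2)]
  show "(F n (n + 2) * G (n + 2) (n + 2)) $$ (j, l) = (G n n * shift_mat i (n + 2)) $$ (j, l)"
    by simp
qed (use F_carrier[of "n + 2" n] G_carrier[of n n] G_carrier[of "n + 2" "n + 2"] in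
    \<open>auto simp: shift_mat_def\<close>)

lemma degree_n_coeff_relation:
  assumes "2 \<le> n"
  shows "F n n * G n n + F n (n + 2) * G (n + 2) n = G n (n - 2) * shift_mat i n"
proof (rule eq_matI)
  fix j l
  assume "j < dim_row (G n (n - 2) * shift_mat i n)" "l < dim_col (G n (n - 2) * shift_mat i n)"
  then have jl: "j \<le> n" "l \<le> n"
    using G_carrier[of "n - 2" n] by (auto simp: shift_mat_def)
  have "(F n (Suc n) * G (Suc n) n) $$ (j, l)
      = (\<Sum>k\<le>Suc n. F n (Suc n) $$ (j, k) * G (Suc n) n $$ (k, l))"
    using F_carrier[of "Suc n" n] G_carrier[of n "Suc n"] jl
    by (intro index_mult_mat_atMost[of _ "n + 1"]) auto
  then have "(F n (Suc n) * G (Suc n) n) $$ (j, l) = 0"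
    using G_Suc_entry_eq_0 jl(2) by simp
  moreover have "{n..n + 2} = {n, Suc n, Suc (Suc n)}"
    by auto
  ultimately show "(F n n * G n n + F n (n + 2) * G (n + 2) n) $$ (j, l)
      = (G n (n - 2) * shift_mat i n) $$ (j, l)"
    using shift_mat_coeff_eq_sum[OF jl(1) assms _ jl(2)] jl
      F_carrier[of n n] G_carrier[of n n] F_carrier[of "n + 2" n] G_carrier[of n "n + 2"]
    by (simp add: numeral_2_eq_2)
qed (use F_carrier[of n n] G_carrier[of n n] F_carrier[of "n + 2" n] G_carrier[of n "n + 2"]
    G_carrier[of "n - 2" n] in \<open>auto simp: shift_mat_def\<close>)

end

theorem corollary4p6:
  fixes a40 a22 a04 a20 a02 :: real
    and G :: "nat \<Rightarrow> nat \<Rightarrow> real mat"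
    and F :: "nat \<Rightarrow> nat \<Rightarrow> nat \<Rightarrow> real mat"
    and n :: nat and i :: nat
  assumes "a40 \<ge> 0" "a22 \<ge> 0" "a04 \<ge> 0" "a40 + a22 > 0" "a22 + a04 > 0"
    and ops: "orthonormal_system (freud_W a40 a22 a04 a20 a02) G"
    and Fdim: "\<And>n m i. i \<in> {1, 2} \<Longrightarrow> m \<le> n + 2 \<Longrightarrow> F n m i \<in> carrier_mat (n + 1) (m + 1)"
    and Fexp: "\<And>n i j x y. i \<in> {1, 2} \<Longrightarrow> j \<le> n \<Longrightarrow>
        (if i = 1 then x else y) ^ 2 * opsP G n j x y
          = (\<Sum>m\<le>n + 2. \<Sum>l\<le>m. (F n m i $$ (j, l)) * opsP G m l x y)"
    and "n \<ge> 2" and "i \<in> {1, 2}"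
  shows "F n n i = G n (n - 2) * minv (G (n - 2) (n - 2)) * transpose_mat (F n (n - 2) i)
                   - F n (n + 2) i * G (n + 2) n * minv (G n n)"
proof -
  \<comment> \<open>The sign conditions on the coefficients of \<open>q\<close> are not needed: integrability of the
    polynomial integrands already follows from orthonormality.\<close>
  interpret var_sq_expansion "freud_W a40 a22 a04 a20 a02" G "\<lambda>n m. F n m i" i
  proof
    show "(\<lambda>(x, y). freud_W a40 a22 a04 a20 a02 x y) \<in> borel_measurable borel"
      unfolding freud_W_def freud_q_def case_prod_beta'
      by (intro borel_measurable_continuous_onI continuous_intros)
  qed (use ops Fdim Fexp \<open>i \<in> {1, 2}\<close> in \<open>auto simp: freud_W_def freud_q_def\<close>)
  obtain m where n: "n = m + 2"
    using \<open>n \<ge> 2\<close> by (metis add.commute le_Suc_ex)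
  have "transpose_mat (F n m i) * G n n = G m m * shift_mat i n"
    using top_degree_coeff_relation[of m] F_transpose[of n m] n by simp
  moreover have "F n n i * G n n + F n (n + 2) i * G (n + 2) n = G n m * shift_mat i n"
    using degree_n_coeff_relation \<open>n \<ge> 2\<close> n by simp
  ultimately show ?thesis
    using n G_carrier[of m n] G_carrier[of n "n + 2"] F_carrier[of m n] F_carrier[of n n]
      F_carrier[of "n + 2" n] shift_mat_carrier[of i n]
    by (intro minv_elimination[OF G_invertible G_carrier G_invertible G_carrier]) auto
qed

end
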